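(* Let $p\ge1$ and let $m(z,w)$, $m'(z,w)$ be monomials (coefficient 1) of degree $p$ in $z_i,\bar z_i,w_j,\bar w_j$ such that $\bar z_1m$ and $\bar w_1m'$ are invariant under all translations $T_{a,b}$. Put $f(z,w)=m(z,w)+m(\gamma_3(z,w))$ and $h(z,w)=m'(z,w)$. Then there exists a single function $P:A(\kappa)^{p+1}\to\mathbb C$ which is $O(2)$-invariant ($P(\gamma k,\gamma k_1,\dots,\gamma k_p)=P(k,k_1,\dots,k_p)$ for all $\gamma\in O(2)$) and satisfies $P(k,k_1,\dots,k_p)=0$ whenever $k\ne k_1+\dots+k_p$, such that for all $(z,w)$ $$f(z,w)=\sum_{k_1,\dots,k_p\in\tilde A}a(k_1)\cdots a(k_p)P(q_1,k_1,\dots,k_p),\qquad h(z,w)=\sum_{k_1,\dots,k_p\in\tilde A}a(k_1)\cdots a(k_p)P(p_1,k_1,\dots,k_p),$$ if and only if $f(z_1,z_2,0,w_2,w_3,0)=h(w_2,w_3,z_1,0,0,\bar z_2)$ for all $z_1,z_2,w_2,w_3$.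
   Context: Integers $l_1>l_2>n_2>0$ with $\kappa^2=l_1^2=l_2^2+n_2^2$; $A(\kappa)=\{k\in\mathbb R^2:|k|=\kappa\}$. Wave vectors $q_1=(l_1,0)$, $q_2=(0,l_1)$, $p_1=(l_2,n_2)$, $p_2=(l_2,-n_2)$, $p_3=(n_2,l_2)$, $p_4=(n_2,-l_2)$, $\tilde A=\{\pm q_i,\pm p_j\}$. For $(z,w)=(z_1,z_2,w_1,\dots,w_4)\in\mathbb C^6$, $a:\tilde A\to\mathbb C$ is defined by $a(q_i)=z_i$, $a(-q_i)=\bar z_i$, $a(p_j)=w_j$, $a(-p_j)=\bar w_j$. Translations: $T_{a,b}(z,w)=(e^{-il_1a}z_1,e^{-il_1b}z_2,e^{-i(l_2a+n_2b)}w_1,e^{-i(l_2a-n_2b)}w_2,e^{-i(n_2a+l_2b)}w_3,e^{-i(n_2a-l_2b)}w_4)$. $\gamma_3(z,w)=(z_1,\bar z_2,w_2,w_1,w_4,w_3)$. *)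

theory Defs
  imports "HOL-Analysis.Analysis"
begin

(* A point (z,w) = (z1,z2,w1,w2,w3,w4) of C^6 is represented by a function
   x :: nat => complex with x 0 = z1, x 1 = z2, x 2 = w1, ..., x 5 = w4
   (coordinates >= 6 are irrelevant junk). *)

definition mk6 :: "complex \<Rightarrow> complex \<Rightarrow> complex \<Rightarrow> complex \<Rightarrow> complex \<Rightarrow> complex \<Rightarrow> (nat \<Rightarrow> complex)" where
  "mk6 c0 c1 c2 c3 c4 c5 = (\<lambda>j. if j = 0 then c0 else if j = 1 then c1 else if j = 2 then c2
      else if j = 3 then c3 else if j = 4 then c4 else c5)"

definition vq1 :: "int \<Rightarrow> real^2" where "vq1 l1 = vector [of_int l1, 0]"
definition vq2 :: "int \<Rightarrow> real^2" where "vq2 l1 = vector [0, of_int l1]"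
definition vp1 :: "int \<Rightarrow> int \<Rightarrow> real^2" where "vp1 l2 n2 = vector [of_int l2, of_int n2]"
definition vp2 :: "int \<Rightarrow> int \<Rightarrow> real^2" where "vp2 l2 n2 = vector [of_int l2, - of_int n2]"
definition vp3 :: "int \<Rightarrow> int \<Rightarrow> real^2" where "vp3 l2 n2 = vector [of_int n2, of_int l2]"
definition vp4 :: "int \<Rightarrow> int \<Rightarrow> real^2" where "vp4 l2 n2 = vector [of_int n2, - of_int l2]"

definition circleA :: "real \<Rightarrow> (real^2) set" where
  "circleA \<kappa> = {k. norm k = \<kappa>}"

definition Atil :: "int \<Rightarrow> int \<Rightarrow> int \<Rightarrow> (real^2) set" where
  "Atil l1 l2 n2 = {vq1 l1, - vq1 l1, vq2 l1, - vq2 l1,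
                    vp1 l2 n2, - vp1 l2 n2, vp2 l2 n2, - vp2 l2 n2,
                    vp3 l2 n2, - vp3 l2 n2, vp4 l2 n2, - vp4 l2 n2}"

definition acoef :: "int \<Rightarrow> int \<Rightarrow> int \<Rightarrow> (nat \<Rightarrow> complex) \<Rightarrow> real^2 \<Rightarrow> complex" where
  "acoef l1 l2 n2 x k =
     (if k = vq1 l1 then x 0 else if k = - vq1 l1 then cnj (x 0)
      else if k = vq2 l1 then x 1 else if k = - vq2 l1 then cnj (x 1)
      else if k = vp1 l2 n2 then x 2 else if k = - vp1 l2 n2 then cnj (x 2)
      else if k = vp2 l2 n2 then x 3 else if k = - vp2 l2 n2 then cnj (x 3)
      else if k = vp3 l2 n2 then x 4 else if k = - vp3 l2 n2 then cnj (x 4)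
      else if k = vp4 l2 n2 then x 5 else if k = - vp4 l2 n2 then cnj (x 5)
      else 0)"

definition Ttr :: "int \<Rightarrow> int \<Rightarrow> int \<Rightarrow> real \<Rightarrow> real \<Rightarrow> (nat \<Rightarrow> complex) \<Rightarrow> (nat \<Rightarrow> complex)" where
  "Ttr l1 l2 n2 a b x = mk6
     (exp (- \<i> * of_real (of_int l1 * a)) * x 0)
     (exp (- \<i> * of_real (of_int l1 * b)) * x 1)
     (exp (- \<i> * of_real (of_int l2 * a + of_int n2 * b)) * x 2)
     (exp (- \<i> * of_real (of_int l2 * a - of_int n2 * b)) * x 3)
     (exp (- \<i> * of_real (of_int n2 * a + of_int l2 * b)) * x 4)
     (exp (- \<i> * of_real (of_int n2 * a - of_int l2 * b)) * x 5)"

definition gamma3 :: "(nat \<Rightarrow> complex) \<Rightarrow> (nat \<Rightarrow> complex)" where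
  "gamma3 x = mk6 (x 0) (cnj (x 1)) (x 3) (x 2) (x 5) (x 4)"

definition mono :: "(nat \<Rightarrow> nat) \<Rightarrow> (nat \<Rightarrow> nat) \<Rightarrow> (nat \<Rightarrow> complex) \<Rightarrow> complex" where
  "mono e ec x = (\<Prod>j<6. x j ^ e j * cnj (x j) ^ ec j)"

definition mdeg :: "(nat \<Rightarrow> nat) \<Rightarrow> (nat \<Rightarrow> nat) \<Rightarrow> nat" where
  "mdeg e ec = (\<Sum>j<6. e j + ec j)"

end

theory Submission
  imports Defs "HOL-Computational_Algebra.Primes"
begin

(* Let \<rho>\<^sub>k denote the rotation taking k to q\<^sub>1 = (\<kappa>, 0). An O(2)-invariant P is determined by
   P(q\<^sub>1, -), which must be invariant under the reflection (x, y) \<mapsto> (x, -y), and P(k, ks) = P(q\<^sub>1, \<rho>\<^sub>k ks).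

   The rotation \<rho> = \<rho>\<^sub>p\<^sub>1 maps \<plusminus>q\<^sub>1, \<plusminus>q\<^sub>2, \<plusminus>p\<^sub>1, \<plusminus>p\<^sub>4 into \<tilde>A, but \<plusminus>p\<^sub>2, \<plusminus>p\<^sub>3 (the wave vectors
   of w\<^sub>2, w\<^sub>3) to points at angles \<plusminus>2\<theta> off the axes, where \<theta> is the polar angle of p\<^sub>1; neither these
   nor the points at angle 3\<theta> reached by reflecting and rotating back lie in \<tilde>A, because that would
   force tan \<theta> \<in> {1/\<surd>3, \<surd>2 \<plusminus> 1}. Consequently the expansion of h at p\<^sub>1, evaluated at w\<^sub>2 = w\<^sub>3 = 0 and
   rewritten with \<rho>, is the expansion of f at q\<^sub>1 in rotated coordinates: this gives the identity.
   Conversely, if the identity holds, P(q\<^sub>1, -) can be taken to count the wave-vector lists of m and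
   of m \<circ> \<gamma>\<^sub>3 and, only when m' involves w\<^sub>2 or w\<^sub>3, the \<rho>-image of the wave-vector list of m'. *)

lemma square_neq_prime_mult_square:
  fixes a b q :: int
  assumes "prime q" "b \<noteq> 0"
  shows "a^2 \<noteq> q * b^2"
proof
  assume eq: "a^2 = q * b^2"
  then have "a \<noteq> 0" using assms by auto
  have q: "prime_elem q" using assms(1) by (rule prime_imp_prime_elem)
  have "multiplicity q (a^2) = 2 * multiplicity q a"
    using q \<open>a \<noteq> 0\<close> by (simp add: prime_elem_multiplicity_power_distrib)
  moreover have "multiplicity q (q * b^2) = Suc (2 * multiplicity q b)"
    using q assms by (simp add: prime_elem_multiplicity_mult_distrib prime_elem_multiplicity_power_distrib)
  ultimately have "2 * multiplicity q a = Suc (2 * multiplicity q b)"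
    using eq by simp
  then show False by presburger
qed

lemma of_int_square_neq_prime_mult_square:
  fixes a b q :: int
  assumes "prime q" "b \<noteq> 0"
  shows "(real_of_int a)^2 \<noteq> real_of_int q * (real_of_int b)^2"
  using square_neq_prime_mult_square [OF assms, of a] by (metis of_int_eq_iff of_int_mult of_int_power)

lemma abs_mult_notin_zero_self: "0 < y \<Longrightarrow> \<bar>t\<bar> \<notin> {0, 1} \<Longrightarrow> \<bar>t * y\<bar> \<notin> {0, y}"
  for t y :: real
  by (auto simp: abs_mult)

lemma less_6_cases: "(j::nat) < 6 \<Longrightarrow> j = 0 \<or> j = 1 \<or> j = 2 \<or> j = 3 \<or> j = 4 \<or> j = 5"
  by linarith

lemma upt_6: "[0..<6] = [0, 1, 2, 3, 4, 5::nat]"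
  by (simp add: upt_rec)

section \<open>Rotations of the plane\<close>

definition vec2 :: "real \<Rightarrow> real \<Rightarrow> real^2" where
  "vec2 x y = vector [x, y]"

lemma vec2_nth [simp]: "vec2 x y $ 1 = x" "vec2 x y $ 2 = y"
  by (simp_all add: vec2_def)

lemma vec2_eq_iff: "(v::real^2) = w \<longleftrightarrow> v$1 = w$1 \<and> v$2 = w$2"
  by (simp add: vec_eq_iff forall_2)

lemma vec2_inject [simp]: "vec2 x y = vec2 x' y' \<longleftrightarrow> x = x' \<and> y = y'"
  by (simp add: vec2_eq_iff)

lemma vec2_components: "vec2 (v$1) (v$2) = v"
  by (simp add: vec2_eq_iff)

lemma vec2_minus: "- vec2 x y = vec2 (-x) (-y)"
  by (simp add: vec2_eq_iff)

lemma inner_vec2: "v \<bullet> w = v$1 * w$1 + v$2 * w$2" for v w :: "real^2"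
  by (simp add: inner_vec_def sum_2)

lemma inner_vec2_vec2 [simp]: "vec2 x y \<bullet> vec2 x' y' = x * x' + y * y'"
  by (simp add: inner_vec2)

lemma norm_vec2: "norm (vec2 x y) = sqrt (x^2 + y^2)"
  by (simp add: norm_eq_sqrt_inner inner_vec2 power2_eq_square)

definition cross2 :: "real^2 \<Rightarrow> real^2 \<Rightarrow> real" where
  "cross2 u v = u$1 * v$2 - u$2 * v$1"

lemma cross2_matrix_vector_mult: "cross2 (A *v u) (A *v v) = det A * cross2 u v"
  by (simp add: cross2_def det_2 matrix_vector_mult_def sum_2 algebra_simps)

lemma cross2_orthogonal_transformation:
  assumes "orthogonal_transformation g"
  shows "(\<forall>u v. cross2 (g u) (g v) = cross2 u v) \<or> (\<forall>u v. cross2 (g u) (g v) = - cross2 u v)"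
proof -
  have "linear g" "orthogonal_matrix (matrix g)"
    using assms by (simp_all add: orthogonal_transformation_matrix)
  then have cross: "cross2 (g u) (g v) = det (matrix g) * cross2 u v" for u v
    using cross2_matrix_vector_mult [of "matrix g" u v] by (simp add: matrix_works)
  from det_orthogonal_matrix [OF \<open>orthogonal_matrix (matrix g)\<close>] show ?thesis
    by (elim disjE) (simp_all add: cross)
qed

lemma inner_cross2_identity: "(k \<bullet> u) * (k \<bullet> w) + cross2 k u * cross2 k w = (k \<bullet> k) * (u \<bullet> w)"
  by (simp add: inner_vec2 cross2_def algebra_simps)

definition cnj2 :: "real^2 \<Rightarrow> real^2" where
  "cnj2 v = vec2 (v$1) (- v$2)"

lemma cnj2_vec2 [simp]: "cnj2 (vec2 x y) = vec2 x (-y)"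
  by (simp add: cnj2_def)

lemma cnj2_cnj2 [simp]: "cnj2 (cnj2 v) = v"
  by (simp add: cnj2_def vec2_components)

lemma cnj2_minus [simp]: "cnj2 (- v) = - cnj2 v"
  by (simp add: cnj2_def vec2_eq_iff)

lemma linear_cnj2: "linear cnj2"
  by (rule linearI) (simp_all add: cnj2_def vec2_eq_iff)

lemma linear_sum_list: "linear f \<Longrightarrow> f (sum_list xs) = sum_list (map f xs)"
  by (induction xs) (simp_all add: linear_add linear_0)

(* For norm k = r \<noteq> 0 this is the rotation taking k to (r, 0). *)
definition rot_to :: "real \<Rightarrow> real^2 \<Rightarrow> real^2 \<Rightarrow> real^2" where
  "rot_to r k v = vec2 ((k \<bullet> v) / r) (cross2 k v / r)"

lemma linear_rot_to: "linear (rot_to r k)"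
  by (rule linearI) (simp_all add: rot_to_def cross2_def vec2_eq_iff inner_add_right
      add_divide_distrib [symmetric] diff_divide_distrib [symmetric] algebra_simps)

lemma rot_to_minus [simp]: "rot_to r k (- v) = - rot_to r k v"
  using linear_neg [OF linear_rot_to] .

lemma rot_to_self: "norm k = r \<Longrightarrow> rot_to r k k = vec2 r 0"
  by (auto simp: rot_to_def cross2_def power2_norm_eq_inner [symmetric] power2_eq_square)

lemma rot_to_base: "r \<noteq> 0 \<Longrightarrow> rot_to r (vec2 r 0) = (\<lambda>v. v)"
  by (simp add: fun_eq_iff rot_to_def cross2_def inner_vec2 vec2_eq_iff)

lemma inner_rot_to:
  "rot_to r k u \<bullet> rot_to r k w = ((k \<bullet> u) * (k \<bullet> w) + cross2 k u * cross2 k w) / (r * r)"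
  by (simp add: rot_to_def add_divide_distrib)

lemma orthogonal_transformation_rot_to:
  assumes "norm k = r" "r \<noteq> 0"
  shows "orthogonal_transformation (rot_to r k)"
proof -
  have "k \<bullet> k = r * r" using assms(1) by (metis power2_eq_square power2_norm_eq_inner)
  with assms(2) show ?thesis
    by (simp add: orthogonal_transformation_def linear_rot_to inner_rot_to inner_cross2_identity)
qed

lemma rot_to_orthogonal_transformation:
  assumes "orthogonal_transformation g"
  shows "(\<forall>k v. rot_to r (g k) (g v) = rot_to r k v)
       \<or> (\<forall>k v. rot_to r (g k) (g v) = cnj2 (rot_to r k v))"
proof -
  have inner: "g k \<bullet> g v = k \<bullet> v" for k v
    using assms by (simp add: orthogonal_transformation_def)
  from cross2_orthogonal_transformation [OF assms] show ?thesis
    by (elim disjE) (simp_all add: rot_to_def inner)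
qed

lemma rot_to_cnj2_vec2:
  "rot_to r (cnj2 k) (vec2 a b) = vec2 ((k$1 * a - k$2 * b) / r) ((k$1 * b + k$2 * a) / r)"
  by (simp add: rot_to_def cnj2_def cross2_def inner_vec2)

lemma rot_to_cnj2_inverse:
  assumes "norm k = r" "r \<noteq> 0"
  shows "rot_to r (cnj2 k) (rot_to r k v) = v"
proof -
  have kk: "k$1 * k$1 + k$2 * k$2 = r * r"
    using assms(1) by (metis inner_vec2 power2_eq_square power2_norm_eq_inner)
  have "rot_to r (cnj2 k) (rot_to r k v) = vec2
      ((k$1 * (k \<bullet> v / r) - k$2 * (cross2 k v / r)) / r) ((k$1 * (cross2 k v / r) + k$2 * (k \<bullet> v / r)) / r)"
    by (simp only: rot_to_def [of r k] rot_to_cnj2_vec2)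
  also have "\<dots> = vec2 ((k$1 * k$1 + k$2 * k$2) * v$1 / (r * r)) ((k$1 * k$1 + k$2 * k$2) * v$2 / (r * r))"
    by (simp add: inner_vec2 cross2_def diff_divide_distrib add_divide_distrib algebra_simps)
  also have "\<dots> = v"
    using assms(2) by (simp only: kk) (simp add: vec2_components)
  finally show ?thesis .
qed

section \<open>Coefficient functions obtained by rotating to a base point\<close>

definition O2_invariant :: "real \<Rightarrow> nat \<Rightarrow> (real^2 \<Rightarrow> (real^2) list \<Rightarrow> complex) \<Rightarrow> bool" where
  "O2_invariant r p P \<longleftrightarrow> (\<forall>g k ks. orthogonal_transformation g \<and> k \<in> circleA r \<and>
     length ks = p \<and> set ks \<subseteq> circleA r \<longrightarrow> P (g k) (map g ks) = P k ks)"

definition momentum_conserving :: "real \<Rightarrow> nat \<Rightarrow> (real^2 \<Rightarrow> (real^2) list \<Rightarrow> complex) \<Rightarrow> bool" where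
  "momentum_conserving r p P \<longleftrightarrow> (\<forall>k ks. k \<in> circleA r \<and> length ks = p \<and> set ks \<subseteq> circleA r \<and>
     k \<noteq> sum_list ks \<longrightarrow> P k ks = 0)"

lemma O2_invariant_rot_to:
  assumes "\<And>js. F (map cnj2 js) = F js"
  shows "O2_invariant r p (\<lambda>k ks. F (map (rot_to r k) ks))"
  unfolding O2_invariant_def
proof (intro allI impI)
  fix g :: "real^2 \<Rightarrow> real^2" and k ks
  assume "orthogonal_transformation g \<and> k \<in> circleA r \<and> length ks = p \<and> set ks \<subseteq> circleA r"
  then have "orthogonal_transformation g" by blast
  from rot_to_orthogonal_transformation [OF this, of r]
  have "map (rot_to r (g k)) (map g ks) = map (rot_to r k) ks
      \<or> map (rot_to r (g k)) (map g ks) = map cnj2 (map (rot_to r k) ks)"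
    by (elim disjE) (simp_all add: comp_def)
  then show "F (map (rot_to r (g k)) (map g ks)) = F (map (rot_to r k) ks)"
    by (elim disjE) (simp_all only: assms)
qed

lemma momentum_conserving_rot_to:
  assumes "r \<noteq> 0" and support: "\<And>js. F js \<noteq> 0 \<Longrightarrow> sum_list js = vec2 r 0"
  shows "momentum_conserving r p (\<lambda>k ks. F (map (rot_to r k) ks))"
  unfolding momentum_conserving_def
proof (intro allI impI)
  fix k ks assume k_ks: "k \<in> circleA r \<and> length ks = p \<and> set ks \<subseteq> circleA r \<and> k \<noteq> sum_list ks"
  then have "norm k = r" by (simp add: circleA_def)
  show "F (map (rot_to r k) ks) = 0"
  proof (rule ccontr)
    assume "F (map (rot_to r k) ks) \<noteq> 0"
    then have "rot_to r k (sum_list ks) = rot_to r k k"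
      using support rot_to_self [OF \<open>norm k = r\<close>] by (simp add: linear_sum_list [OF linear_rot_to])
    with orthogonal_transformation_inj [OF orthogonal_transformation_rot_to [OF \<open>norm k = r\<close> assms(1)]]
    have "sum_list ks = k" by (simp add: inj_eq)
    with k_ks show False by simp
  qed
qed

lemma prod_list_map_if:
  fixes f g :: "'a \<Rightarrow> 'b::semiring_1"
  assumes "\<And>j. j \<in> set js \<Longrightarrow> f j = (if Q j then g j else 0)"
  shows "prod_list (map f js) = (if \<forall>j\<in>set js. Q j then prod_list (map g js) else 0)"
  using assms by (induction js) auto

lemma sum_mult_of_bool_map_eq:
  fixes g :: "'a list \<Rightarrow> 'b::semiring_1"
  assumes "\<And>v. \<psi> (\<phi> v) = v" "\<And>v. \<phi> (\<psi> v) = v" "finite S"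
  shows "(\<Sum>ks\<in>S. g ks * of_bool (map \<phi> ks = T)) = (if map \<psi> T \<in> S then g (map \<psi> T) else 0)"
proof -
  have "map \<phi> ks = T \<longleftrightarrow> ks = map \<psi> T" for ks
    using assms(1,2) by (auto simp: comp_def map_idI)
  then have "g ks * of_bool (map \<phi> ks = T) = (if ks = map \<psi> T then g ks else 0)" for ks
    by simp
  then have "(\<Sum>ks\<in>S. g ks * of_bool (map \<phi> ks = T)) = (\<Sum>ks\<in>S. if ks = map \<psi> T then g ks else 0)"
    by (simp only:)
  with assms(3) show ?thesis by simp
qed

lemma sum_mult_of_bool_eq:
  fixes g :: "'a list \<Rightarrow> 'b::semiring_1"
  shows "finite S \<Longrightarrow> (\<Sum>ks\<in>S. g ks * of_bool (ks = T)) = (if T \<in> S then g T else 0)"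
  using sum_mult_of_bool_map_eq [of "\<lambda>v. v" "\<lambda>v. v" S g T] by simp

lemma sum_lists_map_reindex:
  assumes inv: "\<And>v. \<psi> (\<phi> v) = v" "\<And>v. \<phi> (\<psi> v) = v" and "finite U"
  shows "(\<Sum>ks\<in>{ks. length ks = p \<and> set ks \<subseteq> U}. if set (map \<phi> ks) \<subseteq> U then h (map \<phi> ks) else 0)
       = (\<Sum>js\<in>{js. length js = p \<and> set js \<subseteq> U}. if set (map \<psi> js) \<subseteq> U then h js else 0)"
    (is "sum ?f ?S = sum ?g ?S")
proof -
  have fin: "finite ?S" using finite_lists_length_eq [OF \<open>finite U\<close>] by (simp add: conj_commute)
  have "sum ?f ?S = (\<Sum>ks\<in>{ks\<in>?S. set (map \<phi> ks) \<subseteq> U}. h (map \<phi> ks))"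
    by (rule sum.inter_filter [OF fin, symmetric])
  also have "\<dots> = (\<Sum>js\<in>{js\<in>?S. set (map \<psi> js) \<subseteq> U}. h js)"
    by (rule sum.reindex_bij_witness [of _ "map \<psi>" "map \<phi>"]) (auto simp: inv comp_def map_idI)
  also have "\<dots> = sum ?g ?S"
    by (rule sum.inter_filter [OF fin])
  finally show ?thesis .
qed

section \<open>Wave vectors of monomials\<close>

lemma exp_phase_power_mult_cnj_power:
  "(exp (- \<i> * of_real t) * y) ^ n * cnj (exp (- \<i> * of_real t) * y) ^ m
     = exp (- \<i> * of_real ((real n - real m) * t)) * (y ^ n * cnj y ^ m)"
proof -
  have "exp (- \<i> * of_real t) ^ n * cnj (exp (- \<i> * of_real t)) ^ m
      = exp (of_nat n * (- \<i> * of_real t)) * exp (of_nat m * (\<i> * of_real t))"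
    by (simp add: exp_cnj flip: exp_of_nat_mult)
  also have "\<dots> = exp (- \<i> * of_real ((real n - real m) * t))"
    by (simp add: algebra_simps flip: exp_add)
  finally show ?thesis
    by (simp add: power_mult_distrib algebra_simps)
qed

locale wave_vectors =
  fixes l1 l2 n2 :: int
begin

abbreviation "A \<equiv> Atil l1 l2 n2"
abbreviation "coef \<equiv> acoef l1 l2 n2"

definition wave :: "nat \<Rightarrow> real^2" where
  "wave j = [vq1 l1, vq2 l1, vp1 l2 n2, vp2 l2 n2, vp3 l2 n2, vp4 l2 n2] ! j"

definition mono_waves :: "(nat \<Rightarrow> nat) \<Rightarrow> (nat \<Rightarrow> nat) \<Rightarrow> (real^2) list" where
  "mono_waves e ec = concat (map (\<lambda>j. replicate (e j) (wave j) @ replicate (ec j) (- wave j)) [0..<6])"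

definition expands ::
  "nat \<Rightarrow> (real^2 \<Rightarrow> (real^2) list \<Rightarrow> complex) \<Rightarrow> real^2 \<Rightarrow> ((nat \<Rightarrow> complex) \<Rightarrow> complex) \<Rightarrow> bool"
  where "expands p P k F \<longleftrightarrow>
    (\<forall>x. F x = (\<Sum>ks\<in>{ks. length ks = p \<and> set ks \<subseteq> A}. prod_list (map (coef x) ks) * P k ks))"

lemma wave_q1_p1: "wave 0 = vq1 l1" "wave 2 = vp1 l2 n2"
  by (simp_all add: wave_def numeral_eq_Suc)

lemma length_mono_waves: "length (mono_waves e ec) = mdeg e ec"
  by (simp add: mono_waves_def mdeg_def upt_6 numeral_eq_Suc)

lemma sum_list_mono_waves: "sum_list (mono_waves e ec) = (\<Sum>j<6. (real (e j) - real (ec j)) *\<^sub>R wave j)"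
proof -
  have "sum_list (replicate n v) = real n *\<^sub>R v" for n and v :: "real^2"
    by (induction n) (simp_all add: algebra_simps)
  then show ?thesis
    by (simp add: mono_waves_def upt_6 numeral_eq_Suc algebra_simps)
qed

lemma Ttr_nth: "j < 6 \<Longrightarrow> Ttr l1 l2 n2 s t x j = exp (- \<i> * of_real (wave j \<bullet> vec2 s t)) * x j"
  by (auto simp: Ttr_def mk6_def wave_def vq1_def vq2_def vp1_def vp2_def vp3_def vp4_def
      vec2_def [symmetric] numeral_eq_Suc less_Suc_eq algebra_simps)

lemma mono_Ttr:
  "mono e ec (Ttr l1 l2 n2 s t x)
     = exp (- \<i> * of_real (sum_list (mono_waves e ec) \<bullet> vec2 s t)) * mono e ec x"
proof -
  have "mono e ec (Ttr l1 l2 n2 s t x)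
      = (\<Prod>j<6. exp (- \<i> * of_real ((real (e j) - real (ec j)) * (wave j \<bullet> vec2 s t)))
               * (x j ^ e j * cnj (x j) ^ ec j))"
    unfolding mono_def
  proof (intro prod.cong refl)
    fix j :: nat assume "j \<in> {..<6}"
    then show "Ttr l1 l2 n2 s t x j ^ e j * cnj (Ttr l1 l2 n2 s t x j) ^ ec j
        = exp (- \<i> * of_real ((real (e j) - real (ec j)) * (wave j \<bullet> vec2 s t))) * (x j ^ e j * cnj (x j) ^ ec j)"
      by (simp only: lessThan_iff Ttr_nth exp_phase_power_mult_cnj_power)
  qed
  also have "\<dots> = exp (\<Sum>j<6. - \<i> * of_real ((real (e j) - real (ec j)) * (wave j \<bullet> vec2 s t)))
      * mono e ec x"
    by (simp add: mono_def prod.distrib exp_sum)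
  also have "(\<Sum>j<6. - \<i> * of_real ((real (e j) - real (ec j)) * (wave j \<bullet> vec2 s t)))
      = - \<i> * of_real (sum_list (mono_waves e ec) \<bullet> vec2 s t)"
    by (simp add: sum_list_mono_waves inner_sum_left sum_distrib_left)
  finally show ?thesis .
qed

lemma sum_list_mono_waves_if_invariant:
  assumes inv: "\<And>s t x. cnj (Ttr l1 l2 n2 s t x j) * mono e ec (Ttr l1 l2 n2 s t x) = cnj (x j) * mono e ec x"
    and "j < 6"
  shows "sum_list (mono_waves e ec) = wave j"
proof (rule ccontr)
  define d where "d = wave j - sum_list (mono_waves e ec)"
  assume "sum_list (mono_waves e ec) \<noteq> wave j"
  then have "d \<noteq> 0" by (simp add: d_def)
  (* inv at the point (1, ..., 1) translated by w says exp (i d \<bullet> w) = 1, but d \<bullet> w = pi *)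
  define w where "w = (pi / (d \<bullet> d)) *\<^sub>R d"
  have "d \<bullet> w = pi" using \<open>d \<noteq> 0\<close> by (simp add: w_def)
  have one: "mono e ec (\<lambda>_. 1) = 1" by (simp add: mono_def)
  from inv [of "w$1" "w$2" "\<lambda>_. 1"] \<open>j < 6\<close>
  have "exp (\<i> * of_real (wave j \<bullet> w)) * exp (- \<i> * of_real (sum_list (mono_waves e ec) \<bullet> w)) = 1"
    by (simp add: Ttr_nth mono_Ttr exp_cnj one vec2_components)
  then have "exp (\<i> * of_real (d \<bullet> w)) = 1"
    by (simp add: d_def inner_diff_left algebra_simps flip: exp_add)
  with \<open>d \<bullet> w = pi\<close> show False by simp
qed

end

definition drop_w23 :: "(nat \<Rightarrow> complex) \<Rightarrow> nat \<Rightarrow> complex" where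
  "drop_w23 x = mk6 (x 0) (x 1) (x 2) 0 0 (x 5)"

(* x in the coordinates obtained by rotating p\<^sub>1 to q\<^sub>1 *)
definition rotated_coords :: "(nat \<Rightarrow> complex) \<Rightarrow> nat \<Rightarrow> complex" where
  "rotated_coords x = mk6 (x 2) (cnj (x 5)) 0 (x 0) (x 1) 0"

lemma rotated_coords_drop_w23_iff:
  "(\<forall>z1 z2 w2 w3. F (mk6 z1 z2 0 w2 w3 0) = G (mk6 w2 w3 z1 0 0 (cnj z2)))
     \<longleftrightarrow> (\<forall>x. F (rotated_coords x) = G (drop_w23 x))"
proof
  assume "\<forall>z1 z2 w2 w3. F (mk6 z1 z2 0 w2 w3 0) = G (mk6 w2 w3 z1 0 0 (cnj z2))"
  then show "\<forall>x. F (rotated_coords x) = G (drop_w23 x)"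
    by (simp add: rotated_coords_def drop_w23_def)
next
  assume "\<forall>x. F (rotated_coords x) = G (drop_w23 x)"
  from this [rule_format, of "mk6 w2 w3 z1 0 0 (cnj z2)" for z1 z2 w2 w3]
  show "\<forall>z1 z2 w2 w3. F (mk6 z1 z2 0 w2 w3 0) = G (mk6 w2 w3 z1 0 0 (cnj z2))"
    by (simp add: rotated_coords_def drop_w23_def mk6_def)
qed

section \<open>The twelve wave vectors of a Pythagorean triple\<close>

locale pyth_triple = wave_vectors +
  assumes l2_less_l1: "l2 < l1" and n2_less_l2: "n2 < l2" and n2_pos: "0 < n2"
    and pythagoras: "l1^2 = l2^2 + n2^2"
begin

(* keeps the index 1 in wave 1 and x 1 from being rewritten to Suc 0 *)
declare One_nat_def [simp del]

abbreviation "L1 \<equiv> real_of_int l1"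
abbreviation "L2 \<equiv> real_of_int l2"
abbreviation "N2 \<equiv> real_of_int n2"

abbreviation "rot_p1 \<equiv> rot_to L1 (wave 2)"
abbreviation "rot_p2 \<equiv> rot_to L1 (wave 3)"

lemma real_order: "0 < N2" "N2 < L2" "L2 < L1"
  using l2_less_l1 n2_less_l2 n2_pos by simp_all

lemma L1_neq_0: "L1 \<noteq> 0"
  using real_order by simp

lemma real_pythagoras: "L1^2 = L2^2 + N2^2"
  using arg_cong [OF pythagoras, of real_of_int] by simp

lemma vq_vec2: "vq1 l1 = vec2 L1 0" "vq2 l1 = vec2 0 L1" "vp1 l2 n2 = vec2 L2 N2"
  "vp2 l2 n2 = vec2 L2 (- N2)" "vp3 l2 n2 = vec2 N2 L2" "vp4 l2 n2 = vec2 N2 (- L2)"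
  by (simp_all add: vq1_def vq2_def vp1_def vp2_def vp3_def vp4_def vec2_def)

lemma wave_vec2: "wave 0 = vec2 L1 0" "wave 1 = vec2 0 L1" "wave 2 = vec2 L2 N2"
  "wave 3 = vec2 L2 (- N2)" "wave 4 = vec2 N2 L2" "wave 5 = vec2 N2 (- L2)"
  by (simp_all add: wave_def vq_vec2 numeral_eq_Suc)

lemma Atil_eq: "A = {wave 0, - wave 0, wave 1, - wave 1, wave 2, - wave 2,
    wave 3, - wave 3, wave 4, - wave 4, wave 5, - wave 5}"
  unfolding Atil_def by (simp add: wave_def numeral_eq_Suc)

lemma acoef_wave [simp]:
  assumes "j < 6"
  shows "coef x (wave j) = x j" "coef x (- wave j) = cnj (x j)"
  using less_6_cases [OF assms] real_order
  by (elim disjE; auto simp: acoef_def wave_vec2 vq_vec2 vec2_minus)+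

lemma wave_in_Atil [simp]: "j < 6 \<Longrightarrow> wave j \<in> A" "j < 6 \<Longrightarrow> - wave j \<in> A"
  by (auto simp: Atil_eq dest!: less_6_cases)

lemma uminus_in_Atil [simp]: "- v \<in> A \<longleftrightarrow> v \<in> A"
proof -
  have "- v \<in> A" if "v \<in> A" for v
    using that unfolding Atil_eq by (elim insertE emptyE) simp_all
  from this [of v] this [of "- v"] show ?thesis by auto
qed

lemma finite_Atil_lists: "finite {ks. length ks = p \<and> set ks \<subseteq> A}"
  using finite_lists_length_eq [of A p] by (simp add: Atil_def conj_commute)

lemma norm_wave: "j < 6 \<Longrightarrow> norm (wave j) = L1"
proof -
  have "sqrt (L2^2 + N2^2) = L1"
    using real_order by (simp add: real_pythagoras [symmetric])
  then show "j < 6 \<Longrightarrow> norm (wave j) = L1"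
    using real_order by (auto dest!: less_6_cases simp: wave_vec2 norm_vec2 add.commute)
qed

lemma Atil_subset_circleA: "A \<subseteq> circleA L1"
  using norm_wave by (auto simp: Atil_eq circleA_def)

lemma set_mono_waves: "set (mono_waves e ec) \<subseteq> A"
  by (auto simp: mono_waves_def upt_6)

lemma prod_list_mono_waves: "prod_list (map (coef x) (mono_waves e ec)) = mono e ec x"
  by (simp add: mono_waves_def mono_def upt_6 numeral_eq_Suc mult_ac)

lemma coord_mult_Atil: "v \<in> A \<Longrightarrow> \<bar>v$1 * v$2\<bar> \<in> {0, L2 * N2}"
  using real_order unfolding Atil_eq by (elim insertE emptyE) (simp_all add: wave_vec2 abs_mult)

lemma notin_Atil_if_coord_mult: "\<bar>v$1 * v$2\<bar> \<notin> {0, L2 * N2} \<Longrightarrow> v \<notin> A"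
  using coord_mult_Atil by blast

(* With \<theta> the polar angle of p\<^sub>1, these are \<kappa> cos 2\<theta>, \<kappa> sin 2\<theta>, \<kappa> cos 3\<theta>, \<kappa> sin 3\<theta>. *)
definition "c2 = (L2^2 - N2^2) / L1"
definition "s2 = 2 * L2 * N2 / L1"
definition "c3 = L2 * (L2^2 - 3 * N2^2) / L1^2"
definition "s3 = N2 * (3 * L2^2 - N2^2) / L1^2"

lemma L2_sq_neq_3_N2_sq: "L2^2 \<noteq> 3 * N2^2"
  using of_int_square_neq_prime_mult_square [of 3 n2 l2] n2_pos by simp

lemma coord_mult_c2_s2: "\<bar>c2 * s2\<bar> \<notin> {0, L2 * N2}"
proof -
  have pos: "0 < L2 * N2" "0 < L2^2 - N2^2" "0 < L1^2"
    using real_order by (simp_all add: power_strict_mono)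
  have "2 * (L2^2 - N2^2) \<noteq> L1^2"
    using L2_sq_neq_3_N2_sq real_pythagoras by simp
  with pos have "\<bar>2 * (L2^2 - N2^2) / L1^2\<bar> \<notin> {0, 1}"
    by simp
  moreover have "c2 * s2 = 2 * (L2^2 - N2^2) / L1^2 * (L2 * N2)"
    by (simp add: c2_def s2_def power2_eq_square)
  ultimately show ?thesis
    using abs_mult_notin_zero_self pos(1) by metis
qed

lemma coord_mult_c3_s3: "\<bar>c3 * s3\<bar> \<notin> {0, L2 * N2}"
proof -
  define M where "M = (L2^2 - 3 * N2^2) * (3 * L2^2 - N2^2)"
  have pos: "0 < L2 * N2" "N2^2 < L2^2" "0 < L1^2"
    using real_order by (simp_all add: power_strict_mono)
  have "3 * L2^2 - N2^2 \<noteq> 0"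
    using pos(2) zero_le_power2 [of L2] by linarith
  then have "M \<noteq> 0"
    using L2_sq_neq_3_N2_sq by (simp add: M_def)
  have "(L2 - N2)^2 \<noteq> 2 * N2^2" "(L2 + N2)^2 \<noteq> 2 * N2^2"
    using of_int_square_neq_prime_mult_square [of 2 n2 "l2 - n2"]
      of_int_square_neq_prime_mult_square [of 2 n2 "l2 + n2"] n2_pos by simp_all
  moreover have "M - (L2^2 + N2^2)^2 = 2 * ((L2 - N2)^2 - 2 * N2^2) * ((L2 + N2)^2 - 2 * N2^2)"
    by (simp add: M_def power2_eq_square algebra_simps)
  ultimately have "M \<noteq> (L1^2)^2"
    by (auto simp: real_pythagoras)
  moreover have "M + (L2^2 + N2^2)^2 = 4 * (L2^2 - N2^2)^2"
    by (simp add: M_def power2_eq_square algebra_simps)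
  with pos(2) have "M \<noteq> - ((L1^2)^2)"
    by (auto simp: real_pythagoras)
  ultimately have "\<bar>M / (L1^2)^2\<bar> \<notin> {0, 1}"
    using \<open>M \<noteq> 0\<close> pos(3) by (auto simp: abs_if divide_eq_1_iff divide_eq_minus_1_iff)
  moreover have "c3 * s3 = M / (L1^2)^2 * (L2 * N2)"
    by (simp add: c3_def s3_def M_def power2_eq_square)
  ultimately show ?thesis
    using abs_mult_notin_zero_self pos(1) by metis
qed

lemma vec2_notin_Atil [simp]:
  "vec2 c2 (- s2) \<notin> A" "vec2 s2 c2 \<notin> A" "vec2 c2 s2 \<notin> A" "vec2 s2 (- c2) \<notin> A"
  "vec2 c3 s3 \<notin> A" "vec2 s3 (- c3) \<notin> A"
  using coord_mult_c2_s2 coord_mult_c3_s3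
  by (auto intro!: notin_Atil_if_coord_mult simp: mult.commute)

lemma cnj2_wave [simp]: "cnj2 (wave 0) = wave 0" "cnj2 (wave 1) = - wave 1" "cnj2 (wave 2) = wave 3"
  "cnj2 (wave 3) = wave 2" "cnj2 (wave 4) = wave 5" "cnj2 (wave 5) = wave 4"
  by (simp_all add: wave_vec2 vec2_minus)

lemma rot_p2_rot_p1 [simp]: "rot_p2 (rot_p1 v) = v"
  using rot_to_cnj2_inverse [OF norm_wave L1_neq_0, of 2] by simp

lemma rot_p1_rot_p2 [simp]: "rot_p1 (rot_p2 v) = v"
  using rot_to_cnj2_inverse [OF norm_wave L1_neq_0, of 3] by simp

lemma orthogonal_transformation_rot_p1: "orthogonal_transformation rot_p1"
  using orthogonal_transformation_rot_to [OF norm_wave L1_neq_0] by simp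

lemma rot_p1_wave [simp]: "rot_p1 (wave 0) = wave 3" "rot_p1 (wave 1) = wave 4" "rot_p1 (wave 2) = wave 0"
  "rot_p1 (wave 3) = vec2 c2 (- s2)" "rot_p1 (wave 4) = vec2 s2 c2" "rot_p1 (wave 5) = - wave 1"
  using L1_neq_0 real_pythagoras
  by (simp_all add: rot_to_def wave_vec2 cross2_def c2_def s2_def vec2_minus power2_eq_square field_simps)

lemma rot_p2_wave [simp]: "rot_p2 (wave 0) = wave 2" "rot_p2 (wave 1) = - wave 5" "rot_p2 (wave 2) = vec2 c2 s2"
  "rot_p2 (wave 3) = wave 0" "rot_p2 (wave 4) = wave 1" "rot_p2 (wave 5) = vec2 s2 (- c2)"
  using L1_neq_0 real_pythagoras
  by (simp_all add: rot_to_def wave_vec2 cross2_def c2_def s2_def vec2_minus power2_eq_square field_simps)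

lemma rot_p2_c2_s2 [simp]: "rot_p2 (vec2 c2 s2) = vec2 c3 s3" "rot_p2 (vec2 s2 (- c2)) = vec2 s3 (- c3)"
  using L1_neq_0
  by (simp_all add: rot_to_def wave_vec2 cross2_def c2_def s2_def c3_def s3_def power2_eq_square field_simps)

lemma cnj2_in_Atil [simp]: "cnj2 v \<in> A \<longleftrightarrow> v \<in> A"
proof -
  have "cnj2 v \<in> A" if "v \<in> A" for v
    using that [unfolded Atil_eq] by (elim insertE emptyE) simp_all
  from this [of v] this [of "cnj2 v"] show ?thesis by auto
qed

lemma acoef_gamma3:
  assumes "j \<in> A" shows "coef (gamma3 x) j = coef x (cnj2 j)"
  using assms [unfolded Atil_eq] by (elim insertE emptyE) (simp_all add: gamma3_def mk6_def)

lemma acoef_drop_w23: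
  assumes "j \<in> A" shows "coef (drop_w23 x) j = (if rot_p1 j \<in> A then coef x j else 0)"
  using assms [unfolded Atil_eq] by (elim insertE emptyE) (simp_all add: drop_w23_def mk6_def)

lemma acoef_rotated_coords:
  assumes "j \<in> A" shows "coef (rotated_coords x) j = (if rot_p2 j \<in> A then coef x (rot_p2 j) else 0)"
  using assms [unfolded Atil_eq] by (elim insertE emptyE) (simp_all add: rotated_coords_def mk6_def)

lemma rot_p2_cnj2_rot_p1_notin_Atil:
  assumes "j \<in> A" "rot_p1 j \<notin> A" shows "rot_p2 (cnj2 (rot_p1 j)) \<notin> A"
  using assms [unfolded Atil_eq] by (elim insertE emptyE) simp_all

lemma prod_acoef_gamma3:
  "set ks \<subseteq> A \<Longrightarrow> prod_list (map (coef (gamma3 x)) ks) = prod_list (map (coef x) (map cnj2 ks))"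
  by (induction ks) (simp_all add: acoef_gamma3)

lemma prod_acoef_drop_w23:
  assumes "set ks \<subseteq> A"
  shows "prod_list (map (coef (drop_w23 x)) ks)
       = (if set (map rot_p1 ks) \<subseteq> A then prod_list (map (coef x) ks) else 0)"
proof -
  have "prod_list (map (coef (drop_w23 x)) ks)
      = (if \<forall>j\<in>set ks. rot_p1 j \<in> A then prod_list (map (coef x) ks) else 0)"
    using assms by (intro prod_list_map_if) (auto simp: acoef_drop_w23)
  then show ?thesis by (simp add: image_subset_iff)
qed

lemma prod_acoef_rotated_coords:
  assumes "set js \<subseteq> A"
  shows "prod_list (map (coef (rotated_coords x)) js)
       = (if set (map rot_p2 js) \<subseteq> A then prod_list (map (coef x) (map rot_p2 js)) else 0)"
proof -
  have "prod_list (map (coef (rotated_coords x)) js)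
      = (if \<forall>j\<in>set js. rot_p2 j \<in> A then prod_list (map (coef x \<circ> rot_p2) js) else 0)"
    using assms by (intro prod_list_map_if) (auto simp: acoef_rotated_coords)
  then show ?thesis by (simp add: image_subset_iff)
qed

lemma mono_drop_w23_add:
  "mono e ec (drop_w23 x) + of_bool (\<not> set (map rot_p1 (mono_waves e ec)) \<subseteq> A) * mono e ec x = mono e ec x"
  using prod_acoef_drop_w23 [OF set_mono_waves [of e ec], of x]
  by (simp add: prod_list_mono_waves)

section \<open>Representing the monomials\<close>

lemma expands_rotation_identity:
  assumes P: "O2_invariant L1 p P" and F: "expands p P (wave 0) F" and G: "expands p P (wave 2) G"
  shows "G (drop_w23 x) = F (rotated_coords x)"
proof -
  let ?S = "{ks. length ks = p \<and> set ks \<subseteq> A}"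
  let ?y = "rotated_coords x"
  have P_rot: "P (wave 2) ks = P (wave 0) (map rot_p1 ks)" if "ks \<in> ?S" for ks
  proof -
    have "wave 2 \<in> circleA L1" "set ks \<subseteq> circleA L1" "length ks = p"
      using that Atil_subset_circleA by auto
    with P orthogonal_transformation_rot_p1 have "P (rot_p1 (wave 2)) (map rot_p1 ks) = P (wave 2) ks"
      unfolding O2_invariant_def by blast
    then show ?thesis by simp
  qed
  have "G (drop_w23 x) = (\<Sum>ks\<in>?S. prod_list (map (coef (drop_w23 x)) ks) * P (wave 2) ks)"
    using G by (simp add: expands_def)
  also have "\<dots> = (\<Sum>ks\<in>?S. if set (map rot_p1 ks) \<subseteq> A
      then prod_list (map (coef ?y) (map rot_p1 ks)) * P (wave 0) (map rot_p1 ks) else 0)"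
  proof (intro sum.cong refl)
    fix ks assume ks: "ks \<in> ?S"
    show "prod_list (map (coef (drop_w23 x)) ks) * P (wave 2) ks = (if set (map rot_p1 ks) \<subseteq> A
      then prod_list (map (coef ?y) (map rot_p1 ks)) * P (wave 0) (map rot_p1 ks) else 0)"
    proof (cases "set (map rot_p1 ks) \<subseteq> A")
      case True
      have "prod_list (map (coef ?y) (map rot_p1 ks)) = prod_list (map (coef x) ks)"
        using prod_acoef_rotated_coords [OF True, of x] ks by (simp add: comp_def)
      with True ks show ?thesis by (simp add: prod_acoef_drop_w23 P_rot)
    next
      case False
      with ks show ?thesis by (simp add: prod_acoef_drop_w23)
    qed
  qed
  also have "\<dots> = (\<Sum>js\<in>?S. if set (map rot_p2 js) \<subseteq> A then prod_list (map (coef ?y) js) * P (wave 0) js else 0)"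
    by (rule sum_lists_map_reindex) (simp_all add: Atil_def)
  also have "\<dots> = (\<Sum>js\<in>?S. prod_list (map (coef ?y) js) * P (wave 0) js)"
    by (intro sum.cong refl) (simp add: prod_acoef_rotated_coords)
  also have "\<dots> = F ?y"
    using F by (simp add: expands_def)
  finally show ?thesis .
qed

(* The \<rho>-image of L' is needed only if it leaves A, i.e. if m' involves w\<^sub>2 or w\<^sub>3;
   otherwise the lists L, cnj2 L already produce m' at p\<^sub>1 through the identity. *)
definition base_coeff :: "(real^2) list \<Rightarrow> (real^2) list \<Rightarrow> (real^2) list \<Rightarrow> complex" where
  "base_coeff L L' js = of_bool (js = L) + of_bool (map cnj2 js = L)
     + of_bool (\<not> set (map rot_p1 L') \<subseteq> A) * (of_bool (js = map rot_p1 L') + of_bool (map cnj2 js = map rot_p1 L'))"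

definition coeff :: "(real^2) list \<Rightarrow> (real^2) list \<Rightarrow> real^2 \<Rightarrow> (real^2) list \<Rightarrow> complex" where
  "coeff L L' k ks = base_coeff L L' (map (rot_to L1 k) ks)"

lemma O2_invariant_coeff: "O2_invariant L1 p (coeff L L')"
  unfolding coeff_def [abs_def] by (rule O2_invariant_rot_to) (simp add: base_coeff_def comp_def algebra_simps)

lemma momentum_conserving_coeff:
  assumes "sum_list L = wave 0" "sum_list L' = wave 2"
  shows "momentum_conserving L1 p (coeff L L')"
  unfolding coeff_def [abs_def]
proof (rule momentum_conserving_rot_to [OF L1_neq_0])
  fix js assume "base_coeff L L' js \<noteq> 0"
  then have "js = L \<or> map cnj2 js = L \<or> js = map rot_p1 L' \<or> map cnj2 js = map rot_p1 L'"
    by (auto simp: base_coeff_def)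
  moreover have "sum_list L = vec2 L1 0" "sum_list (map rot_p1 L') = vec2 L1 0"
    using assms by (simp_all add: wave_vec2(1) flip: linear_sum_list [OF linear_rot_to])
  moreover have "sum_list js = vec2 L1 0" if "sum_list (map cnj2 js) = vec2 L1 0"
    using that by (simp add: cnj2_def vec2_eq_iff flip: linear_sum_list [OF linear_cnj2])
  ultimately show "sum_list js = vec2 L1 0"
    by auto
qed

lemma expands_coeff_q1:
  assumes "mdeg e ec = p"
  shows "expands p (coeff (mono_waves e ec) L') (wave 0) (\<lambda>x. mono e ec x + mono e ec (gamma3 x))"
  unfolding expands_def
proof
  fix x
  let ?S = "{ks. length ks = p \<and> set ks \<subseteq> A}"
  let ?L = "mono_waves e ec"
  let ?c = "\<not> set (map rot_p1 L') \<subseteq> A"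
  define g where "g ks = prod_list (map (coef x) ks)" for ks
  have base: "coeff ?L L' (wave 0) ks = base_coeff ?L L' ks" for ks
    using L1_neq_0 by (simp add: coeff_def wave_vec2 rot_to_base)
  have L_in: "?L \<in> ?S" "map cnj2 ?L \<in> ?S"
    using assms set_mono_waves [of e ec] by (auto simp: length_mono_waves)
  have vanish: "map rot_p1 L' \<notin> ?S \<and> map cnj2 (map rot_p1 L') \<notin> ?S" if ?c
    using that by auto
  have "(\<Sum>ks\<in>?S. g ks * coeff ?L L' (wave 0) ks)
      = (\<Sum>ks\<in>?S. g ks * of_bool (ks = ?L)) + (\<Sum>ks\<in>?S. g ks * of_bool (map cnj2 ks = ?L))
      + of_bool ?c * ((\<Sum>ks\<in>?S. g ks * of_bool (ks = map rot_p1 L'))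
                     + (\<Sum>ks\<in>?S. g ks * of_bool (map cnj2 ks = map rot_p1 L')))"
    by (simp add: base base_coeff_def distrib_left sum.distrib sum_distrib_left mult_ac)
  also have "\<dots> = g ?L + g (map cnj2 ?L)"
  proof -
    have cnj: "(\<Sum>ks\<in>?S. g ks * of_bool (map cnj2 ks = T)) = (if map cnj2 T \<in> ?S then g (map cnj2 T) else 0)"
      for T by (rule sum_mult_of_bool_map_eq) (simp_all add: finite_Atil_lists)
    show ?thesis
      unfolding sum_mult_of_bool_eq [OF finite_Atil_lists] cnj using L_in vanish by (cases ?c) auto
  qed
  also have "\<dots> = mono e ec x + mono e ec (gamma3 x)"
    using prod_acoef_gamma3 [OF set_mono_waves [of e ec], of x] by (simp add: g_def prod_list_mono_waves)
  finally show "mono e ec x + mono e ec (gamma3 x)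
      = (\<Sum>ks\<in>?S. prod_list (map (coef x) ks) * coeff ?L L' (wave 0) ks)"
    by (simp add: g_def)
qed

lemma expands_coeff_p1:
  assumes "mdeg e ec = p" "mdeg e' ec' = p"
    and H: "\<And>x. mono e ec (rotated_coords x) + mono e ec (gamma3 (rotated_coords x)) = mono e' ec' (drop_w23 x)"
  shows "expands p (coeff (mono_waves e ec) (mono_waves e' ec')) (wave 2) (mono e' ec')"
  unfolding expands_def
proof
  fix x
  let ?S = "{ks. length ks = p \<and> set ks \<subseteq> A}"
  let ?L = "mono_waves e ec" and ?L' = "mono_waves e' ec'"
  let ?c = "\<not> set (map rot_p1 ?L') \<subseteq> A"
  let ?y = "rotated_coords x"
  define g where "g ks = prod_list (map (coef x) ks)" for ks
  have rot: "(\<Sum>ks\<in>?S. g ks * of_bool (map rot_p1 ks = T))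
      = (if map rot_p2 T \<in> ?S then g (map rot_p2 T) else 0)" for T
    by (rule sum_mult_of_bool_map_eq) (simp_all add: finite_Atil_lists)
  have cnj_rot: "(\<Sum>ks\<in>?S. g ks * of_bool (map (\<lambda>v. cnj2 (rot_p1 v)) ks = T))
      = (if map (\<lambda>v. rot_p2 (cnj2 v)) T \<in> ?S then g (map (\<lambda>v. rot_p2 (cnj2 v)) T) else 0)" for T
    by (rule sum_mult_of_bool_map_eq) (simp_all add: finite_Atil_lists)
  have L: "set ?L \<subseteq> A" "set (map cnj2 ?L) \<subseteq> A" "length ?L = p"
    using assms(1) set_mono_waves [of e ec] by (auto simp: length_mono_waves)
  have L': "?L' \<in> ?S"
    using assms(2) set_mono_waves [of e' ec'] by (simp add: length_mono_waves)
  have "(\<Sum>ks\<in>?S. g ks * coeff ?L ?L' (wave 2) ks)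
      = (\<Sum>ks\<in>?S. g ks * of_bool (map rot_p1 ks = ?L))
      + (\<Sum>ks\<in>?S. g ks * of_bool (map (\<lambda>v. cnj2 (rot_p1 v)) ks = ?L))
      + of_bool ?c * ((\<Sum>ks\<in>?S. g ks * of_bool (map rot_p1 ks = map rot_p1 ?L'))
                    + (\<Sum>ks\<in>?S. g ks * of_bool (map (\<lambda>v. cnj2 (rot_p1 v)) ks = map rot_p1 ?L')))"
    by (simp add: coeff_def base_coeff_def comp_def distrib_left sum.distrib sum_distrib_left mult_ac)
  also have "\<dots> = prod_list (map (coef ?y) ?L) + prod_list (map (coef ?y) (map cnj2 ?L)) + of_bool ?c * g ?L'"
  proof -
    have "map rot_p2 (map cnj2 (map rot_p1 ?L')) \<notin> ?S" if ?c
      using that rot_p2_cnj2_rot_p1_notin_Atil set_mono_waves [of e' ec'] by auto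
    then show ?thesis
      unfolding rot cnj_rot using L L' prod_acoef_rotated_coords [OF L(1), of x]
        prod_acoef_rotated_coords [OF L(2), of x]
      by (cases ?c) (simp_all add: g_def comp_def)
  qed
  also have "\<dots> = mono e ec ?y + mono e ec (gamma3 ?y) + of_bool ?c * mono e' ec' x"
    using prod_acoef_gamma3 [OF L(1), of ?y] by (simp add: g_def prod_list_mono_waves)
  also have "\<dots> = mono e' ec' x"
    by (simp only: H mono_drop_w23_add)
  finally show "mono e' ec' x = (\<Sum>ks\<in>?S. prod_list (map (coef x) ks) * coeff ?L ?L' (wave 2) ks)"
    by (simp add: g_def)
qed

lemma representation_iff:
  assumes "mdeg e ec = p" "mdeg e' ec' = p"
    and "sum_list (mono_waves e ec) = wave 0" "sum_list (mono_waves e' ec') = wave 2"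
  shows "(\<exists>P. O2_invariant L1 p P \<and> momentum_conserving L1 p P
            \<and> expands p P (wave 0) (\<lambda>x. mono e ec x + mono e ec (gamma3 x))
            \<and> expands p P (wave 2) (mono e' ec'))
     \<longleftrightarrow> (\<forall>x. mono e ec (rotated_coords x) + mono e ec (gamma3 (rotated_coords x))
              = mono e' ec' (drop_w23 x))"
proof
  assume "\<exists>P. O2_invariant L1 p P \<and> momentum_conserving L1 p P
            \<and> expands p P (wave 0) (\<lambda>x. mono e ec x + mono e ec (gamma3 x))
            \<and> expands p P (wave 2) (mono e' ec')"
  then obtain P where "O2_invariant L1 p P" "expands p P (wave 0) (\<lambda>x. mono e ec x + mono e ec (gamma3 x))"
    "expands p P (wave 2) (mono e' ec')"
    by blast
  from expands_rotation_identity [OF this] show "\<forall>x. mono e ec (rotated_coords x)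
      + mono e ec (gamma3 (rotated_coords x)) = mono e' ec' (drop_w23 x)"
    by simp
next
  assume "\<forall>x. mono e ec (rotated_coords x) + mono e ec (gamma3 (rotated_coords x)) = mono e' ec' (drop_w23 x)"
  with assms show "\<exists>P. O2_invariant L1 p P \<and> momentum_conserving L1 p P
            \<and> expands p P (wave 0) (\<lambda>x. mono e ec x + mono e ec (gamma3 x))
            \<and> expands p P (wave 2) (mono e' ec')"
    by (intro exI [of _ "coeff (mono_waves e ec) (mono_waves e' ec')"] conjI O2_invariant_coeff
        momentum_conserving_coeff expands_coeff_q1 expands_coeff_p1) simp_all
qed

end

theorem mainTheorem12:
  fixes l1 l2 n2 :: int and p :: nat and e ec e' ec' :: "nat \<Rightarrow> nat"
  assumes hl: "l1 > l2" "l2 > n2" "n2 > 0" "l1^2 = l2^2 + n2^2"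
    and hp: "p \<ge> 1"
    and hm: "mdeg e ec = p" and hm': "mdeg e' ec' = p"
    and inv_m: "\<And>a b x. cnj (Ttr l1 l2 n2 a b x 0) * mono e ec (Ttr l1 l2 n2 a b x)
                         = cnj (x 0) * mono e ec x"
    and inv_m': "\<And>a b x. cnj (Ttr l1 l2 n2 a b x 2) * mono e' ec' (Ttr l1 l2 n2 a b x)
                         = cnj (x 2) * mono e' ec' x"
  shows "(\<exists>P :: real^2 \<Rightarrow> (real^2) list \<Rightarrow> complex.
            (\<forall>g k ks. orthogonal_transformation g \<and> k \<in> circleA (of_int l1) \<and>
                 length ks = p \<and> set ks \<subseteq> circleA (of_int l1)
                 \<longrightarrow> P (g k) (map g ks) = P k ks)
          \<and> (\<forall>k ks. k \<in> circleA (of_int l1) \<and> length ks = p \<and> set ks \<subseteq> circleA (of_int l1)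
                 \<and> k \<noteq> sum_list ks \<longrightarrow> P k ks = 0)
          \<and> (\<forall>x. mono e ec x + mono e ec (gamma3 x)
                 = (\<Sum>ks\<in>{ks. length ks = p \<and> set ks \<subseteq> Atil l1 l2 n2}.
                      prod_list (map (acoef l1 l2 n2 x) ks) * P (vq1 l1) ks))
          \<and> (\<forall>x. mono e' ec' x
                 = (\<Sum>ks\<in>{ks. length ks = p \<and> set ks \<subseteq> Atil l1 l2 n2}.
                      prod_list (map (acoef l1 l2 n2 x) ks) * P (vp1 l2 n2) ks)))
     \<longleftrightarrow>
     (\<forall>z1 z2 w2 w3.
        mono e ec (mk6 z1 z2 0 w2 w3 0) + mono e ec (gamma3 (mk6 z1 z2 0 w2 w3 0))
        = mono e' ec' (mk6 w2 w3 z1 0 0 (cnj z2)))"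
proof -
  interpret pyth_triple l1 l2 n2
    using hl by unfold_locales
  have "sum_list (mono_waves e ec) = wave 0" "sum_list (mono_waves e' ec') = wave 2"
    by (simp_all add: sum_list_mono_waves_if_invariant inv_m inv_m')
  from representation_iff [OF hm hm' this] show ?thesis
    unfolding O2_invariant_def momentum_conserving_def expands_def wave_q1_p1
      rotated_coords_drop_w23_iff [of "\<lambda>x. mono e ec x + mono e ec (gamma3 x)" "mono e' ec'", symmetric] .
qed

end
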